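(* Let $k\ge3$ and let $G=(V,E)$ be a $k$-uniform hyperstar of size $d\ge2$ with $V=[n]$ and heart the vertex $1$, and let $\mathcal L$ be its Laplacian tensor. Suppose $(\lambda,\mathbf x)$ is an H-eigenpair of $\mathcal L$ with $\lambda\neq1$. Then: (i) If $i,j\ge2$ lie in a common edge, then $x_i=x_j$ when $k$ is odd and $|x_i|=|x_j|$ when $k$ is even. (ii) If $i,j\ge2$ and $x_i\neq0$, $x_j\neq0$, then $x_i=x_j$ when $k$ is odd and $|x_i|=|x_j|$ when $k$ is even.
   Context: A $k$-uniform hyperstar of size $d$ is a hypergraph whose vertex set is a disjoint union $V=V_0\cup V_1\cup\cdots\cup V_d$ with $|V_0|=1$, $|V_1|=\cdots=|V_d|=k-1$, and edge set $\{V_0\cup V_i: i\in[d]\}$; the vertex in $V_0$ is the heart. For a $k$-uniform hypergraph with $d_i$ the number of edges containing $i$, the Laplacian tensor $\mathcal L=\mathcal D-\mathcal A$ ($\mathcal D$ diagonal with entries $d_i$, $\mathcal A$ with entries $\frac1{(k-1)!}$ at index tuples forming an edge and $0$ otherwise) satisfies $(\mathcal L\mathbf x^{k-1})_i=d_ix_i^{k-1}-\sum_{e\ni i}\prod_{s\in e\setminus\{i\}}x_s$. An H-eigenpair $(\lambda,\mathbf x)$ consists of $\lambda\in\mathbb R$ and $\mathbf x\in\mathbb R^n\setminus\{0\}$ with $(\mathcal L\mathbf x^{k-1})_i=\lambda x_i^{k-1}$ for all $i$. *)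

theory Defs
  imports Complex_Main
begin

definition is_hyperstar :: "nat \<Rightarrow> nat \<Rightarrow> nat \<Rightarrow> nat \<Rightarrow> nat set set \<Rightarrow> bool" where
  "is_hyperstar k d n h E \<longleftrightarrow>
     (\<exists>P :: nat \<Rightarrow> nat set.
        (\<forall>i\<in>{1..d}. card (P i) = k - 1 \<and> finite (P i) \<and> h \<notin> P i) \<and>
        (\<forall>i\<in>{1..d}. \<forall>j\<in>{1..d}. i \<noteq> j \<longrightarrow> P i \<inter> P j = {}) \<and>
        {1..n} = insert h (\<Union>i\<in>{1..d}. P i) \<and>
        E = (\<lambda>i. insert h (P i)) ` {1..d})"

definition hdeg :: "nat set set \<Rightarrow> nat \<Rightarrow> nat" where
  "hdeg E i = card {e \<in> E. i \<in> e}"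

text \<open>(L x^{k-1})_i = d_i x_i^{k-1} - sum over edges e containing i of
  the product of x_s over s in e - {i}, for the Laplacian tensor L = D - A.\<close>
definition lap_apply :: "nat \<Rightarrow> nat set set \<Rightarrow> (nat \<Rightarrow> real) \<Rightarrow> nat \<Rightarrow> real" where
  "lap_apply k E x i = real (hdeg E i) * x i ^ (k - 1)
      - (\<Sum>e\<in>{e \<in> E. i \<in> e}. \<Prod>s\<in>e - {i}. x s)"

text \<open>H-eigenpair of the Laplacian tensor on vertex set {1..n}; x is a real
  vector indexed by {1..n} (values outside are irrelevant).\<close>
definition H_eigenpair :: "nat \<Rightarrow> nat \<Rightarrow> nat set set \<Rightarrow> real \<Rightarrow> (nat \<Rightarrow> real) \<Rightarrow> bool" where
  "H_eigenpair k n E lam x \<longleftrightarrow>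
     (\<exists>i\<in>{1..n}. x i \<noteq> 0) \<and>
     (\<forall>i\<in>{1..n}. lap_apply k E x i = lam * x i ^ (k - 1))"

end

theory Submission
  imports Defs
begin

text \<open>Every non-heart vertex i of a hyperstar lies in exactly one edge {h} \<union> B, so the
  eigen-equation at i reads (1 - \<lambda>) x_i^(k-1) = x_h \<Prod>(B - {i}) x. Multiplying by x_i shows
  that (1 - \<lambda>) x_i^k = x_h \<Prod>B x is the same for all i \<in> B, whence x_i^k is constant on B
  when \<lambda> \<noteq> 1. If moreover x_i \<noteq> 0, then |x_s| = |x_i| on B, the product over B - {i} has
  absolute value |x_i|^(k-2), and cancelling it gives |1 - \<lambda>| |x_i| = |x_h| (and
  (1 - \<lambda>) x_i = x_h when k is odd), a value independent of the edge.\<close>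

lemma real_power_eq_imp_eq_odd_or_abs_eq:
  fixes a b :: real
  assumes "a ^ k = b ^ k" and "0 < k"
  shows "(odd k \<longrightarrow> a = b) \<and> (even k \<longrightarrow> \<bar>a\<bar> = \<bar>b\<bar>)"
proof (intro conjI impI)
  assume "odd k"
  then show "a = b"
    by (metis assms(1) odd_real_root_power_cancel)
next
  show "\<bar>a\<bar> = \<bar>b\<bar>"
    using assms by (metis power_abs power_eq_imp_eq_base abs_ge_zero)
qed

lemma hyperstar_non_heart_vertex:
  assumes "is_hyperstar k d n h E" and "i \<in> {1..n}" and "i \<noteq> h"
  obtains B where "i \<in> B" and "finite B" and "h \<notin> B" and "card B = k - 1"
    and "B \<subseteq> {1..n}" and "\<And>j. j \<in> B \<Longrightarrow> {e \<in> E. j \<in> e} = {insert h B}"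
proof -
  obtain P where P_block: "\<forall>a\<in>{1..d}. card (P a) = k - 1 \<and> finite (P a) \<and> h \<notin> P a"
    and P_disjoint: "\<forall>a\<in>{1..d}. \<forall>b\<in>{1..d}. a \<noteq> b \<longrightarrow> P a \<inter> P b = {}"
    and P_cover: "{1..n} = insert h (\<Union>a\<in>{1..d}. P a)"
    and E_def: "E = (\<lambda>a. insert h (P a)) ` {1..d}"
    using assms(1) unfolding is_hyperstar_def by blast
  obtain a where a: "a \<in> {1..d}" "i \<in> P a"
    using assms(2,3) P_cover by blast
  have "{e \<in> E. j \<in> e} = {insert h (P a)}" if "j \<in> P a" for j
  proof -
    have "b = a" if "b \<in> {1..d}" "j \<in> P b" for b
      using P_disjoint a(1) \<open>j \<in> P a\<close> that by blast
    moreover have "j \<noteq> h"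
      using P_block a(1) \<open>j \<in> P a\<close> by blast
    ultimately show ?thesis
      unfolding E_def using a(1) \<open>j \<in> P a\<close> by blast
  qed
  moreover have "P a \<subseteq> {1..n}"
    using P_cover a(1) by blast
  ultimately show thesis
    using that[of "P a"] a(2) P_block a(1) by blast
qed

lemma lap_apply_single_edge:
  assumes "{e \<in> E. i \<in> e} = {insert h B}" and "finite B" and "h \<notin> B" and "i \<in> B"
  shows "lap_apply k E x i = x i ^ (k - 1) - x h * (\<Prod>s\<in>B - {i}. x s)"
proof -
  have "insert h B - {i} = insert h (B - {i})"
    using assms(3,4) by auto
  then have "(\<Prod>s\<in>insert h B - {i}. x s) = x h * (\<Prod>s\<in>B - {i}. x s)"
    using assms(2,3) by simp
  moreover have "hdeg E i = 1"
    unfolding hdeg_def assms(1) by simp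
  ultimately show ?thesis
    unfolding lap_apply_def assms(1) by simp
qed

text \<open>The eigen-equations on one edge {h} \<union> B, written with c = 1 - \<lambda> and y = x_h.\<close>

lemma block_equations_power_eq:
  fixes x :: "'a \<Rightarrow> real"
  assumes "finite B" and "c \<noteq> 0" and "0 < k"
    and block: "\<And>i. i \<in> B \<Longrightarrow> c * x i ^ (k - 1) = y * (\<Prod>s\<in>B - {i}. x s)"
    and "i \<in> B" and "j \<in> B"
  shows "x i ^ k = x j ^ k"
proof -
  have "c * x i ^ k = y * prod x B" if "i \<in> B" for i
  proof -
    have "c * x i ^ k = x i * (c * x i ^ (k - 1))"
      using \<open>0 < k\<close> by (cases k) auto
    also have "\<dots> = y * (x i * (\<Prod>s\<in>B - {i}. x s))"
      using block[OF that] by simp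
    also have "\<dots> = y * prod x B"
      using prod.remove[OF \<open>finite B\<close> that, of x] by simp
    finally show ?thesis .
  qed
  then have "c * x i ^ k = c * x j ^ k"
    using \<open>i \<in> B\<close> \<open>j \<in> B\<close> by simp
  then show ?thesis
    using \<open>c \<noteq> 0\<close> by simp
qed

lemma block_equations_nonzero_value:
  fixes x :: "'a \<Rightarrow> real"
  assumes "finite B" and "c \<noteq> 0" and "card B = k - 1" and "2 \<le> k"
    and block: "\<And>i. i \<in> B \<Longrightarrow> c * x i ^ (k - 1) = y * (\<Prod>s\<in>B - {i}. x s)"
    and "i \<in> B" and "x i \<noteq> 0"
  shows "\<bar>c\<bar> * \<bar>x i\<bar> = \<bar>y\<bar>" and "odd k \<Longrightarrow> c * x i = y"
proof -
  have card_rest: "card (B - {i}) = k - 2"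
    using assms(3,6) by simp
  have power_split: "x i ^ (k - 1) = x i * x i ^ (k - 2)"
    using \<open>2 \<le> k\<close> by (simp flip: power_Suc add: Suc_diff_Suc numeral_2_eq_2)
  have block_i: "(c * x i) * x i ^ (k - 2) = y * (\<Prod>s\<in>B - {i}. x s)"
    using block[OF \<open>i \<in> B\<close>] power_split by (simp add: mult.assoc)
  have "0 < k"
    using \<open>2 \<le> k\<close> by simp
  have same_power: "(odd k \<longrightarrow> x s = x i) \<and> (even k \<longrightarrow> \<bar>x s\<bar> = \<bar>x i\<bar>)" if "s \<in> B" for s
    using real_power_eq_imp_eq_odd_or_abs_eq[OF
        block_equations_power_eq[OF assms(1,2) \<open>0 < k\<close> block that \<open>i \<in> B\<close>] \<open>0 < k\<close>] .
  have "\<bar>\<Prod>s\<in>B - {i}. x s\<bar> = \<bar>x i\<bar> ^ (k - 2)"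
  proof -
    have "(\<Prod>s\<in>B - {i}. \<bar>x s\<bar>) = (\<Prod>s\<in>B - {i}. \<bar>x i\<bar>)"
    proof (rule prod.cong)
      show "\<bar>x s\<bar> = \<bar>x i\<bar>" if "s \<in> B - {i}" for s
        using same_power[of s] that by (cases "odd k") auto
    qed simp
    then show ?thesis
      using card_rest by (simp add: abs_prod)
  qed
  moreover have "\<bar>(c * x i) * x i ^ (k - 2)\<bar> = \<bar>y * (\<Prod>s\<in>B - {i}. x s)\<bar>"
    using block_i by simp
  ultimately have "(\<bar>c\<bar> * \<bar>x i\<bar>) * \<bar>x i\<bar> ^ (k - 2) = \<bar>y\<bar> * \<bar>x i\<bar> ^ (k - 2)"
    by (simp only: abs_mult power_abs)
  then show "\<bar>c\<bar> * \<bar>x i\<bar> = \<bar>y\<bar>"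
    using \<open>x i \<noteq> 0\<close> by simp
  assume "odd k"
  have "(\<Prod>s\<in>B - {i}. x s) = x i ^ (k - 2)"
  proof -
    have "(\<Prod>s\<in>B - {i}. x s) = (\<Prod>s\<in>B - {i}. x i)"
      using same_power \<open>odd k\<close> by (intro prod.cong) auto
    then show ?thesis
      using card_rest by simp
  qed
  with block_i show "c * x i = y"
    using \<open>x i \<noteq> 0\<close> by simp
qed

lemma hyperstar_eigenpair_edge_equations:
  assumes "is_hyperstar k d n h E" and "H_eigenpair k n E lam x"
    and "i \<in> {1..n}" and "i \<noteq> h"
  obtains B where "i \<in> B" and "finite B" and "card B = k - 1"
    and "\<And>e. e \<in> E \<Longrightarrow> i \<in> e \<Longrightarrow> e = insert h B"
    and "\<And>j. j \<in> B \<Longrightarrow> (1 - lam) * x j ^ (k - 1) = x h * (\<Prod>s\<in>B - {j}. x s)"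
proof -
  obtain B where B: "i \<in> B" "finite B" "h \<notin> B" "card B = k - 1" "B \<subseteq> {1..n}"
    and edges: "\<And>j. j \<in> B \<Longrightarrow> {e \<in> E. j \<in> e} = {insert h B}"
    using hyperstar_non_heart_vertex[OF assms(1,3,4)] by blast
  have "e = insert h B" if "e \<in> E" "i \<in> e" for e
    using edges[OF \<open>i \<in> B\<close>] that by blast
  moreover have "(1 - lam) * x j ^ (k - 1) = x h * (\<Prod>s\<in>B - {j}. x s)" if "j \<in> B" for j
  proof -
    have "lap_apply k E x j = lam * x j ^ (k - 1)"
      using assms(2) B(5) that unfolding H_eigenpair_def by blast
    then show ?thesis
      using lap_apply_single_edge[OF edges[OF that] B(2,3) that] by (simp add: algebra_simps)
  qed
  ultimately show thesis
    using that B(1,2,4) by blast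
qed

lemma hyperstar_eigenvector_power_eq_on_edge:
  assumes "is_hyperstar k d n h E" and "H_eigenpair k n E lam x" and "lam \<noteq> 1" and "0 < k"
    and "e \<in> E" and "i \<in> e" and "j \<in> e" and "i \<in> {1..n}" and "i \<noteq> h" and "j \<noteq> h"
  shows "x i ^ k = x j ^ k"
proof -
  obtain B where "i \<in> B" "finite B" "card B = k - 1"
    and edge: "\<And>e. e \<in> E \<Longrightarrow> i \<in> e \<Longrightarrow> e = insert h B"
    and block: "\<And>v. v \<in> B \<Longrightarrow> (1 - lam) * x v ^ (k - 1) = x h * (\<Prod>s\<in>B - {v}. x s)"
    using hyperstar_eigenpair_edge_equations[OF assms(1,2,8,9)] by blast
  have "j \<in> B"
    using edge[OF \<open>e \<in> E\<close> \<open>i \<in> e\<close>] \<open>j \<in> e\<close> \<open>j \<noteq> h\<close> by simp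
  moreover have "1 - lam \<noteq> 0"
    using \<open>lam \<noteq> 1\<close> by simp
  ultimately show ?thesis
    using block_equations_power_eq[OF \<open>finite B\<close> _ \<open>0 < k\<close> block \<open>i \<in> B\<close>] by simp
qed

lemma hyperstar_eigenvector_nonzero_value:
  assumes "is_hyperstar k d n h E" and "H_eigenpair k n E lam x" and "lam \<noteq> 1" and "2 \<le> k"
    and "i \<in> {1..n}" and "i \<noteq> h" and "x i \<noteq> 0"
  shows "\<bar>1 - lam\<bar> * \<bar>x i\<bar> = \<bar>x h\<bar>" and "odd k \<Longrightarrow> (1 - lam) * x i = x h"
proof -
  obtain B where "i \<in> B" "finite B" "card B = k - 1"
    and "\<And>e. e \<in> E \<Longrightarrow> i \<in> e \<Longrightarrow> e = insert h B"
    and block: "\<And>v. v \<in> B \<Longrightarrow> (1 - lam) * x v ^ (k - 1) = x h * (\<Prod>s\<in>B - {v}. x s)"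
    using hyperstar_eigenpair_edge_equations[OF assms(1,2,5,6)] by blast
  moreover have "1 - lam \<noteq> 0"
    using \<open>lam \<noteq> 1\<close> by simp
  ultimately show "\<bar>1 - lam\<bar> * \<bar>x i\<bar> = \<bar>x h\<bar>" "odd k \<Longrightarrow> (1 - lam) * x i = x h"
    using block_equations_nonzero_value[OF \<open>finite B\<close> _ _ \<open>2 \<le> k\<close> block \<open>i \<in> B\<close> \<open>x i \<noteq> 0\<close>]
    by blast+
qed

theorem lemma5p1:
  fixes k d n :: nat and E :: "nat set set" and lam :: real and x :: "nat \<Rightarrow> real"
  assumes "k \<ge> 3" and "d \<ge> 2"
    and "is_hyperstar k d n 1 E"
    and "H_eigenpair k n E lam x"
    and "lam \<noteq> 1"
  shows "(\<forall>i\<in>{2..n}. \<forall>j\<in>{2..n}. (\<exists>e\<in>E. i \<in> e \<and> j \<in> e) \<longrightarrow>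
            (odd k \<longrightarrow> x i = x j) \<and> (even k \<longrightarrow> \<bar>x i\<bar> = \<bar>x j\<bar>))
       \<and> (\<forall>i\<in>{2..n}. \<forall>j\<in>{2..n}. x i \<noteq> 0 \<longrightarrow> x j \<noteq> 0 \<longrightarrow>
            (odd k \<longrightarrow> x i = x j) \<and> (even k \<longrightarrow> \<bar>x i\<bar> = \<bar>x j\<bar>))"
proof (rule conjI; intro ballI impI)
  have "0 < k" and "2 \<le> k"
    using assms(1) by auto
  fix i j assume i: "i \<in> {2..n}" and j: "j \<in> {2..n}"
  {
    assume "\<exists>e\<in>E. i \<in> e \<and> j \<in> e"
    then obtain e where "e \<in> E" "i \<in> e" "j \<in> e"
      by blast
    with i j have "x i ^ k = x j ^ k"
      by (intro hyperstar_eigenvector_power_eq_on_edge[OF assms(3,4,5) \<open>0 < k\<close>]) auto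
    then show "(odd k \<longrightarrow> x i = x j) \<and> (even k \<longrightarrow> \<bar>x i\<bar> = \<bar>x j\<bar>)"
      using \<open>0 < k\<close> by (rule real_power_eq_imp_eq_odd_or_abs_eq)
  }
  assume "x i \<noteq> 0" "x j \<noteq> 0"
  note value_i = hyperstar_eigenvector_nonzero_value[OF assms(3,4,5) \<open>2 \<le> k\<close> _ _ \<open>x i \<noteq> 0\<close>]
  note value_j = hyperstar_eigenvector_nonzero_value[OF assms(3,4,5) \<open>2 \<le> k\<close> _ _ \<open>x j \<noteq> 0\<close>]
  have "\<bar>1 - lam\<bar> * \<bar>x i\<bar> = \<bar>1 - lam\<bar> * \<bar>x j\<bar>"
    and "odd k \<Longrightarrow> (1 - lam) * x i = (1 - lam) * x j"
    using value_i value_j i j by auto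
  then show "(odd k \<longrightarrow> x i = x j) \<and> (even k \<longrightarrow> \<bar>x i\<bar> = \<bar>x j\<bar>)"
    using \<open>lam \<noteq> 1\<close> by simp
qed

end
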